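(* Fix $d\ge 2$. The function $C(\rho,\sigma)=\sqrt{1-\mathcal{F}_2(\rho,\sigma)}$, where $\mathcal{F}_2(\rho,\sigma)=\operatorname{tr}(\rho\sigma)/\max[\operatorname{tr}(\rho^2),\operatorname{tr}(\sigma^2)]$, is a metric on the set of $d\times d$ density matrices; i.e. it is nonnegative, vanishes iff $\rho=\sigma$, is symmetric, and satisfies $C(\rho,\sigma)\le C(\rho,\tau)+C(\tau,\sigma)$ for all density matrices $\rho,\sigma,\tau$.
   Context: A density matrix is a positive semidefinite complex matrix of unit trace. *)

theory Defs
  imports "HOL-Analysis.Analysis"
begin

text \<open>Complex d x d matrices are rendered as complex^'n^'n with d = CARD('n).\<close>

definition hermitian_mat :: "complex^'n^'n \<Rightarrow> bool" where
  "hermitian_mat A \<longleftrightarrow> (\<forall>i j. A $ i $ j = cnj (A $ j $ i))"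

definition psd_mat :: "complex^'n::finite^'n \<Rightarrow> bool" where
  "psd_mat A \<longleftrightarrow> hermitian_mat A \<and>
     (\<forall>x :: complex^'n. 0 \<le> Re (\<Sum>i\<in>UNIV. \<Sum>j\<in>UNIV. cnj (x $ i) * A $ i $ j * x $ j))"

definition density_matrix :: "complex^'n::finite^'n \<Rightarrow> bool" where
  "density_matrix A \<longleftrightarrow> psd_mat A \<and> trace A = 1"

text \<open>F_2(rho,sigma) = tr(rho sigma) / max(tr(rho^2), tr(sigma^2)); these traces are real
  for Hermitian matrices, so we take real parts.\<close>
definition F2 :: "complex^'n::finite^'n \<Rightarrow> complex^'n^'n \<Rightarrow> real" where
  "F2 \<rho> \<sigma> = Re (trace (\<rho> ** \<sigma>)) / max (Re (trace (\<rho> ** \<rho>))) (Re (trace (\<sigma> ** \<sigma>)))"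

definition C_dist :: "complex^'n::finite^'n \<Rightarrow> complex^'n^'n \<Rightarrow> real" where
  "C_dist \<rho> \<sigma> = sqrt (1 - F2 \<rho> \<sigma>)"

end

theory Submission
  imports Defs
begin

(* Via <A, B> = Re (trace (A ** B)), Hermitian matrices form a real inner product space on which
  C becomes cdist. Since <x, y> / max (|x|^2) (|y|^2) = min (|x|^2) (|y|^2) * <x / |x|^2, y / |y|^2>
  and min s s' is the inner product of the indicator functions of [0, s] and [0, s'], any three
  nonzero vectors lift to unit vectors X, Y, Z whose inner products are exactly these ratios.
  Then cdist x y = |X - Y| / sqrt 2, and the triangle inequality is inherited from the Euclidean one. *)

lemma sorted_triple_exists:
  fixes a b c :: "'a::linorder"
  obtains x y z where "x \<le> y" "y \<le> z" "{x, y, z} = {a, b, c}"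
proof -
  consider "a \<le> b" "b \<le> c" | "a \<le> c" "c \<le> b" | "b \<le> a" "a \<le> c"
    | "b \<le> c" "c \<le> a" | "c \<le> a" "a \<le> b" | "c \<le> b" "b \<le> a"
    by (meson linear)
  then show thesis
    by cases (auto intro: that simp: insert_commute)
qed

lemma inner_le_max_norm_square:
  fixes p q :: "'a::real_inner"
  shows "inner p q \<le> max ((norm p)\<^sup>2) ((norm q)\<^sup>2)"
proof -
  have "inner p q \<le> norm p * norm q" by (rule norm_cauchy_schwarz)
  also have "\<dots> \<le> max ((norm p)\<^sup>2) ((norm q)\<^sup>2)"
    by (cases "norm p \<le> norm q")
      (auto simp: power2_eq_square le_max_iff_disj intro: mult_left_mono mult_right_mono)
  finally show ?thesis .
qed

lemma dist_unit_vectors: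
  fixes P Q :: "'a::real_inner"
  assumes "norm P = 1" "norm Q = 1"
  shows "dist P Q = sqrt 2 * sqrt (1 - inner P Q)"
proof -
  have "(dist P Q)\<^sup>2 = 2 * (1 - inner P Q)"
    using assms
    by (simp add: norm_eq_1 dist_norm power2_norm_eq_inner inner_diff_left inner_diff_right inner_commute)
  then show ?thesis
    by (metis real_sqrt_mult real_sqrt_unique zero_le_dist)
qed

definition cdist :: "'a::real_inner \<Rightarrow> 'a \<Rightarrow> real" where
  "cdist p q = sqrt (1 - inner p q / max ((norm p)\<^sup>2) ((norm q)\<^sup>2))"

lemma cdist_commute: "cdist p q = cdist q p"
  by (simp add: cdist_def inner_commute max.commute)

lemma cdist_nonneg: "0 \<le> cdist p q"
  using inner_le_max_norm_square[of p q]
  by (cases "max ((norm p)\<^sup>2) ((norm q)\<^sup>2) = 0")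
    (auto simp: cdist_def divide_le_eq_1 less_max_iff_disj)

lemma cdist_eq_0_iff: "cdist p q = 0 \<longleftrightarrow> p = q \<and> p \<noteq> 0"
proof
  assume "cdist p q = 0"
  then have quot: "inner p q / max ((norm p)\<^sup>2) ((norm q)\<^sup>2) = 1"
    by (simp add: cdist_def)
  then have "p \<noteq> 0 \<or> q \<noteq> 0" by auto
  then have "max ((norm p)\<^sup>2) ((norm q)\<^sup>2) > 0" by (auto simp: less_max_iff_disj)
  with quot have "inner p q = max ((norm p)\<^sup>2) ((norm q)\<^sup>2)" by (simp add: field_simps)
  then have "(norm (p - q))\<^sup>2 \<le> 0"
    by (simp add: power2_norm_eq_inner inner_diff_left inner_diff_right inner_commute max_def)
  with \<open>p \<noteq> 0 \<or> q \<noteq> 0\<close> show "p = q \<and> p \<noteq> 0" by auto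
next
  assume "p = q \<and> p \<noteq> 0"
  then show "cdist p q = 0" by (auto simp: cdist_def power2_norm_eq_inner)
qed

definition tensor3 :: "real \<times> real \<times> real \<Rightarrow> 'a::real_vector \<Rightarrow> 'a \<times> 'a \<times> 'a" where
  "tensor3 w x = (fst w *\<^sub>R x, fst (snd w) *\<^sub>R x, snd (snd w) *\<^sub>R x)"

lemma inner_tensor3: "inner (tensor3 v x) (tensor3 w y) = inner v w * inner x y"
  by (cases v; cases w) (simp add: tensor3_def algebra_simps)

(* For s in {t1, t2, t3}, a discretisation of the indicator function of [0, s]. *)
definition step_weights :: "real \<Rightarrow> real \<Rightarrow> real \<Rightarrow> real \<Rightarrow> real \<times> real \<times> real" where
  "step_weights t1 t2 t3 s =
     (sqrt t1, if t2 \<le> s then sqrt (t2 - t1) else 0, if t3 \<le> s then sqrt (t3 - t2) else 0)"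

lemma inner_step_weights:
  assumes "0 \<le> t1" "t1 \<le> t2" "t2 \<le> t3" "s \<in> {t1, t2, t3}" "s' \<in> {t1, t2, t3}"
  shows "inner (step_weights t1 t2 t3 s) (step_weights t1 t2 t3 s') = min s s'"
  using assms by (auto simp: step_weights_def)

definition step_lift :: "real \<Rightarrow> real \<Rightarrow> real \<Rightarrow> 'a::real_inner \<Rightarrow> 'a \<times> 'a \<times> 'a" where
  "step_lift t1 t2 t3 x = tensor3 (step_weights t1 t2 t3 ((norm x)\<^sup>2)) (x /\<^sub>R (norm x)\<^sup>2)"

lemma inner_step_lift:
  fixes x y :: "'a::real_inner"
  assumes "0 \<le> t1" "t1 \<le> t2" "t2 \<le> t3"
    and "(norm x)\<^sup>2 \<in> {t1, t2, t3}" "(norm y)\<^sup>2 \<in> {t1, t2, t3}"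
  shows "inner (step_lift t1 t2 t3 x) (step_lift t1 t2 t3 y)
    = inner x y / max ((norm x)\<^sup>2) ((norm y)\<^sup>2)"
proof -
  have "inner (step_lift t1 t2 t3 x) (step_lift t1 t2 t3 y)
      = min ((norm x)\<^sup>2) ((norm y)\<^sup>2) * inner x y / ((norm x)\<^sup>2 * (norm y)\<^sup>2)"
    using assms by (simp add: step_lift_def inner_tensor3 inner_step_weights divide_inverse ac_simps)
  also have "\<dots> = inner x y / max ((norm x)\<^sup>2) ((norm y)\<^sup>2)"
    by (cases "x = 0 \<or> y = 0") (auto simp: min_def max_def)
  finally show ?thesis .
qed

lemma cdist_triangle:
  fixes p q r :: "'a::real_inner"
  assumes "p \<noteq> 0" "q \<noteq> 0" "r \<noteq> 0"
  shows "cdist p q \<le> cdist p r + cdist r q"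
proof -
  obtain t1 t2 t3 where sorted: "t1 \<le> t2" "t2 \<le> t3"
    and squares: "{t1, t2, t3} = {(norm p)\<^sup>2, (norm q)\<^sup>2, (norm r)\<^sup>2}"
    by (rule sorted_triple_exists)
  have "t1 \<in> {(norm p)\<^sup>2, (norm q)\<^sup>2, (norm r)\<^sup>2}" using squares by blast
  then have "0 \<le> t1" by auto
  let ?L = "step_lift t1 t2 t3 :: 'a \<Rightarrow> 'a \<times> 'a \<times> 'a"
  have inner_L: "inner (?L x) (?L y) = inner x y / max ((norm x)\<^sup>2) ((norm y)\<^sup>2)"
    if "x \<in> {p, q, r}" "y \<in> {p, q, r}" for x y
    using that sorted squares \<open>0 \<le> t1\<close> by (intro inner_step_lift) auto
  have cdist_L: "cdist x y = dist (?L x) (?L y) / sqrt 2"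
    if "x \<in> {p, q, r}" "y \<in> {p, q, r}" for x y
  proof -
    have "norm (?L z) = 1" if "z \<in> {p, q, r}" for z
      using inner_L[OF that that] that assms by (auto simp: norm_eq_1 power2_norm_eq_inner)
    then show ?thesis
      using that by (simp add: dist_unit_vectors inner_L cdist_def)
  qed
  have "dist (?L p) (?L q) \<le> dist (?L p) (?L r) + dist (?L r) (?L q)"
    by (rule dist_triangle)
  then show ?thesis
    by (simp add: cdist_L divide_right_mono flip: add_divide_distrib)
qed

lemma Re_trace_mult_hermitian:
  fixes A B :: "complex^'n::finite^'n"
  assumes "hermitian_mat A"
  shows "Re (trace (A ** B)) = inner A B"
proof -
  have entry: "Re (A $ i $ k * B $ k $ i) = inner (A $ k $ i) (B $ k $ i)" for i k
  proof -
    have "A $ i $ k = cnj (A $ k $ i)"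
      using assms unfolding hermitian_mat_def by blast
    then show ?thesis by (simp add: inner_complex_def)
  qed
  have "Re (trace (A ** B)) = (\<Sum>i\<in>UNIV. \<Sum>k\<in>UNIV. Re (A $ i $ k * B $ k $ i))"
    by (simp add: trace_def matrix_matrix_mult_def)
  also have "\<dots> = (\<Sum>i\<in>UNIV. \<Sum>k\<in>UNIV. inner (A $ k $ i) (B $ k $ i))"
    by (simp only: entry)
  also have "\<dots> = (\<Sum>k\<in>UNIV. \<Sum>i\<in>UNIV. inner (A $ k $ i) (B $ k $ i))"
    by (rule sum.swap)
  also have "\<dots> = inner A B"
    by (simp add: inner_vec_def)
  finally show ?thesis .
qed

lemma C_dist_eq_cdist:
  fixes A B :: "complex^'n::finite^'n"
  assumes "hermitian_mat A" "hermitian_mat B"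
  shows "C_dist A B = cdist A B"
  using assms
  by (simp add: C_dist_def F2_def cdist_def Re_trace_mult_hermitian power2_norm_eq_inner)

lemma density_matrix_hermitian: "density_matrix A \<Longrightarrow> hermitian_mat A"
  by (simp add: density_matrix_def psd_mat_def)

lemma density_matrix_nonzero: "density_matrix A \<Longrightarrow> A \<noteq> 0"
  by (auto simp: density_matrix_def trace_def)

theorem theorem9:
  fixes \<rho> \<sigma> \<tau> :: "complex^'n::finite^'n"
  assumes "CARD('n) \<ge> 2"
    and "density_matrix \<rho>" and "density_matrix \<sigma>" and "density_matrix \<tau>"
  shows "C_dist \<rho> \<sigma> \<ge> 0
    \<and> (C_dist \<rho> \<sigma> = 0 \<longleftrightarrow> \<rho> = \<sigma>)
    \<and> C_dist \<rho> \<sigma> = C_dist \<sigma> \<rho>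
    \<and> C_dist \<rho> \<sigma> \<le> C_dist \<rho> \<tau> + C_dist \<tau> \<sigma>"
proof -
  have C_dist_cdist: "C_dist A B = cdist A B"
    if "A \<in> {\<rho>, \<sigma>, \<tau>}" "B \<in> {\<rho>, \<sigma>, \<tau>}" for A B
    using that assms by (auto intro: C_dist_eq_cdist density_matrix_hermitian)
  have nonzero: "\<rho> \<noteq> 0" "\<sigma> \<noteq> 0" "\<tau> \<noteq> 0"
    using assms by (simp_all add: density_matrix_nonzero)
  show ?thesis
    using cdist_nonneg[of \<rho> \<sigma>] cdist_eq_0_iff[of \<rho> \<sigma>] cdist_commute[of \<rho> \<sigma>]
      cdist_triangle[OF nonzero(1,2,3)]
    by (simp add: C_dist_cdist nonzero(1))
qed

end
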